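(* Let $\kappa$ be an ordinal of uncountable cofinality and let $Z$, $Z_X$, $Z_Y$ be as described in the context. Let $z: \alpha \to \alpha$ be a morphism in $Z$. If there exist morphisms $u: \alpha \to \beta$ and $v: \alpha \to \gamma$ in $Z$ such that $u z u^{-1}$ lies in $Z_X$ and $v z v^{-1}$ lies in $Z_Y$, then $z = \mathrm{id}_\alpha$.
   Context: For an ordinal $\alpha \ge 2$ let $G_\alpha$ be the free group on the set $\alpha$; for $\gamma \le \alpha$ let $D^\gamma_\alpha: G_\gamma \to G_\alpha$ be the natural inclusion. Let $Z$ be the groupoid with object set $[2,\kappa)$ generated by: the elements of $G_\alpha$ as automorphisms of the object $\alpha$; and, for each pair $\alpha \neq \beta$ in $[2,\kappa)$, a morphism $y^\beta_\alpha: \beta \to \alpha$; subject to the relations of each group $G_\alpha$ and the relations $y^\beta_\alpha \, D^{\varepsilon}_\beta(a)\, y^\alpha_\beta = D^{\varepsilon}_\alpha(a)$ for all $a \in G_\varepsilon$, $\varepsilon = \min(\alpha,\beta)$ (so $y^\alpha_\beta = (y^\beta_\alpha)^{-1}$). (This is the fundamental groupoid of the graph of groups with vertex groups $G_\alpha$, edges $y^\beta_\alpha$, edge groups $G_{\min(\alpha,\beta)}$ and inclusions as edge maps.) $Z_X$ is the subgroupoid of $Z$ consisting of the morphisms in the image of some vertex group $G_\alpha$. $Z_Y$ is the subgroupoid of $Z$ generated by the edges $y^\beta_\alpha$. *)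

theory Defs
  imports Main "HOL-Library.Countable_Set"
begin

text \<open>Ordinals are modelled as elements of an arbitrary well-ordered type 'o.
  The ordinal alpha is identified with the set of its predecessors, so the free
  group G_alpha on the set alpha is the free group on {xi. xi < alpha}.\<close>

definition uncountable_cofinality :: "'o::wellorder \<Rightarrow> bool" where
  "uncountable_cofinality \<kappa> \<longleftrightarrow>
     (\<forall>S. S \<subseteq> {\<xi>. \<xi> < \<kappa>} \<and> countable S \<longrightarrow> (\<exists>\<beta><\<kappa>. \<forall>\<xi>\<in>S. \<xi> < \<beta>))"

text \<open>Objects of Z: ordinals alpha with 2 <= alpha < kappa.\<close>
definition obj :: "'o::wellorder \<Rightarrow> 'o \<Rightarrow> bool" where
  "obj \<kappa> \<alpha> \<longleftrightarrow> \<alpha> < \<kappa> \<and> (\<exists>a b. a < b \<and> b < \<alpha>)"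

text \<open>Letters: Gen alpha xi s is the free generator xi (exponent +1 if s, -1 otherwise)
  of the vertex group G_alpha, as an automorphism of alpha;
  Edge alpha beta is the edge y^beta_alpha : beta -> alpha.\<close>
datatype 'o letter = Gen 'o 'o bool | Edge 'o 'o

fun lsrc :: "'o letter \<Rightarrow> 'o" where
  "lsrc (Gen \<alpha> \<xi> s) = \<alpha>" | "lsrc (Edge \<alpha> \<beta>) = \<beta>"

fun ltgt :: "'o letter \<Rightarrow> 'o" where
  "ltgt (Gen \<alpha> \<xi> s) = \<alpha>" | "ltgt (Edge \<alpha> \<beta>) = \<alpha>"

fun valid_letter :: "'o::wellorder \<Rightarrow> 'o letter \<Rightarrow> bool" where
  "valid_letter \<kappa> (Gen \<alpha> \<xi> s) \<longleftrightarrow> obj \<kappa> \<alpha> \<and> \<xi> < \<alpha>"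
| "valid_letter \<kappa> (Edge \<alpha> \<beta>) \<longleftrightarrow> obj \<kappa> \<alpha> \<and> obj \<kappa> \<beta> \<and> \<alpha> \<noteq> \<beta>"

fun linv :: "'o letter \<Rightarrow> 'o letter" where
  "linv (Gen \<alpha> \<xi> s) = Gen \<alpha> \<xi> (\<not> s)" | "linv (Edge \<alpha> \<beta>) = Edge \<beta> \<alpha>"

text \<open>Words are read in composition order: [l1,...,ln] denotes l1 o ... o ln.\<close>
definition winv :: "'o letter list \<Rightarrow> 'o letter list" where
  "winv w = rev (map linv w)"

inductive is_path :: "'o::wellorder \<Rightarrow> 'o letter list \<Rightarrow> 'o \<Rightarrow> 'o \<Rightarrow> bool" for \<kappa> where
  Nil: "obj \<kappa> a \<Longrightarrow> is_path \<kappa> [] a a"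
| Cons: "valid_letter \<kappa> l \<Longrightarrow> is_path \<kappa> w s t \<Longrightarrow> lsrc l = t \<Longrightarrow> is_path \<kappa> (l # w) s (ltgt l)"

definition gen_at :: "'o \<Rightarrow> 'o \<times> bool \<Rightarrow> 'o letter" where
  "gen_at \<alpha> p = Gen \<alpha> (fst p) (snd p)"

text \<open>Defining relations: the relations of the free groups G_alpha (free cancellation),
  and y^beta_alpha D^eps_beta(a) y^alpha_beta = D^eps_alpha(a) for every a in G_eps,
  eps = min alpha beta (a given by any word over the generators xi < eps).\<close>
inductive base_rel :: "'o::wellorder \<Rightarrow> 'o letter list \<Rightarrow> 'o letter list \<Rightarrow> bool" for \<kappa> where
  cancel: "obj \<kappa> \<alpha> \<Longrightarrow> \<xi> < \<alpha> \<Longrightarrow> base_rel \<kappa> [Gen \<alpha> \<xi> s, Gen \<alpha> \<xi> (\<not> s)] []"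
| edge: "obj \<kappa> \<alpha> \<Longrightarrow> obj \<kappa> \<beta> \<Longrightarrow> \<alpha> \<noteq> \<beta> \<Longrightarrow> (\<forall>p\<in>set a. fst p < min \<alpha> \<beta>) \<Longrightarrow>
     base_rel \<kappa> ([Edge \<alpha> \<beta>] @ map (gen_at \<beta>) a @ [Edge \<beta> \<alpha>]) (map (gen_at \<alpha>) a)"

definition zstep :: "'o::wellorder \<Rightarrow> 'o letter list \<Rightarrow> 'o letter list \<Rightarrow> bool" where
  "zstep \<kappa> w w' \<longleftrightarrow> (\<exists>p u v q s t. w = p @ u @ q \<and> w' = p @ v @ q \<and> base_rel \<kappa> u v \<and>
        is_path \<kappa> w s t \<and> is_path \<kappa> w' s t)"

definition zeq :: "'o::wellorder \<Rightarrow> 'o letter list \<Rightarrow> 'o letter list \<Rightarrow> bool" where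
  "zeq \<kappa> = (\<lambda>w w'. zstep \<kappa> w w' \<or> zstep \<kappa> w' w)\<^sup>*\<^sup>*"

definition in_ZX :: "'o::wellorder \<Rightarrow> 'o letter list \<Rightarrow> bool" where
  "in_ZX \<kappa> w \<longleftrightarrow> (\<exists>\<delta> x. (\<forall>l\<in>set x. \<exists>\<xi> s. l = Gen \<delta> \<xi> s) \<and> zeq \<kappa> w x)"

definition in_ZY :: "'o::wellorder \<Rightarrow> 'o letter list \<Rightarrow> bool" where
  "in_ZY \<kappa> w \<longleftrightarrow> (\<exists>x. (\<forall>l\<in>set x. \<exists>\<alpha> \<beta>. l = Edge \<alpha> \<beta>) \<and> zeq \<kappa> w x)"

end

theory Submission
  imports Defs
begin

text \<open>Erasing the vertex-group letters of a word and freely reducing what remains is a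
  groupoid homomorphism from Z onto the free groupoid on the edges: the relator
  y^beta_alpha D(a) y^alpha_beta = D(a) becomes y^beta_alpha y^alpha_beta = 1.
  This homomorphism kills Z_X and is injective on Z_Y, because a freely trivial word in
  the edges is trivial in Z. If u z u^-1 lies in Z_X, then z lies in its kernel, hence so
  does v z v^-1, which therefore is trivial as an element of Z_Y; so z is trivial.\<close>

lemma linv_linv [simp]: "linv (linv a) = a"
  by (cases a) auto

lemma lsrc_linv [simp]: "lsrc (linv a) = ltgt a"
  and ltgt_linv [simp]: "ltgt (linv a) = lsrc a"
  by (cases a; simp)+

lemma winv_simps [simp]:
  "winv [] = []"
  "winv (a # w) = winv w @ [linv a]"
  "winv (w1 @ w2) = winv w2 @ winv w1"
  by (auto simp: winv_def)

lemma winv_winv [simp]: "winv (winv w) = w"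
  by (induction w) auto

fun reduced :: "'o letter list \<Rightarrow> bool" where
  "reduced (a # b # w) \<longleftrightarrow> b \<noteq> linv a \<and> reduced (b # w)"
| "reduced _ \<longleftrightarrow> True"

fun red_cons :: "'o letter \<Rightarrow> 'o letter list \<Rightarrow> 'o letter list" where
  "red_cons a (b # w) = (if b = linv a then w else a # b # w)"
| "red_cons a [] = [a]"

definition red_act :: "'o letter list \<Rightarrow> 'o letter list \<Rightarrow> 'o letter list" where
  "red_act w r = foldr red_cons w r"

abbreviation free_reduction :: "'o letter list \<Rightarrow> 'o letter list" where
  "free_reduction w \<equiv> red_act w []"

lemma red_act_simps [simp]:
  "red_act [] r = r"
  "red_act (a # w) r = red_cons a (red_act w r)"
  "red_act (w1 @ w2) r = red_act w1 (red_act w2 r)"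
  by (auto simp: red_act_def)

lemma reduced_ConsD: "reduced (b # w) \<Longrightarrow> reduced w"
  by (cases w) auto

lemma reduced_red_cons: "reduced r \<Longrightarrow> reduced (red_cons a r)"
  by (cases r) (auto dest: reduced_ConsD)

lemma reduced_red_act: "reduced r \<Longrightarrow> reduced (red_act w r)"
  by (induction w) (auto intro: reduced_red_cons)

lemma red_cons_linv_cancel: "reduced r \<Longrightarrow> red_cons a (red_cons (linv a) r) = r"
  by (cases r rule: reduced.cases) auto

lemma red_act_winv: "reduced r \<Longrightarrow> red_act w (red_act (winv w) r) = r"
  by (induction w arbitrary: r) (auto simp: red_cons_linv_cancel reduced_red_cons)

lemma red_act_winv': "reduced r \<Longrightarrow> red_act (winv w) (red_act w r) = r"
  using red_act_winv[of r "winv w"] by simp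

lemma red_act_red_cons:
  assumes "reduced r"
  shows "red_act (red_cons a w) r = red_cons a (red_act w r)"
proof (cases w)
  case (Cons b w')
  then show ?thesis
    using red_cons_linv_cancel[OF reduced_red_act[OF assms], of a w'] by auto
qed simp

lemma red_act_free_reduction: "reduced r \<Longrightarrow> red_act (free_reduction w) r = red_act w r"
  by (induction w) (auto simp: red_act_red_cons)

lemma free_reduction_reduced: "reduced w \<Longrightarrow> free_reduction w = w"
  by (induction w rule: reduced.induct) auto

lemma not_reduced_cancelling_pair: "\<not> reduced w \<Longrightarrow> \<exists>p a q. w = p @ [a, linv a] @ q"
proof (induction w rule: reduced.induct)
  case (1 a b w)
  show ?case
  proof (cases "b = linv a")
    case True
    then show ?thesis by (metis append_Cons append_Nil)
  next
    case False
    with 1 obtain p c q where "b # w = p @ [c, linv c] @ q" by auto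
    then have "a # b # w = (a # p) @ [c, linv c] @ q" by simp
    then show ?thesis by blast
  qed
qed auto

lemma free_reduction_cancel: "free_reduction (p @ [a, linv a] @ q) = free_reduction (p @ q)"
  using red_cons_linv_cancel[OF reduced_red_act[of "[]" q], of a] by simp

lemma free_reduction_cong:
  assumes "free_reduction w = free_reduction w'"
  shows "free_reduction (p @ w @ q) = free_reduction (p @ w' @ q)"
proof -
  have "red_act w (free_reduction q) = red_act w' (free_reduction q)"
    using red_act_free_reduction[OF reduced_red_act[of "[]" q]] assms by (metis reduced.simps(2))
  then show ?thesis by simp
qed

lemma free_reduction_conj_eq_Nil_iff:
  "free_reduction (u @ w @ winv u) = [] \<longleftrightarrow> free_reduction w = []"
proof
  assume conj: "free_reduction (u @ w @ winv u) = []"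
  have "free_reduction w = free_reduction (winv u @ (u @ w @ winv u) @ u)"
    by (simp add: red_act_winv' reduced_red_act)
  also have "\<dots> = free_reduction (winv u @ [] @ u)"
    using conj by (intro free_reduction_cong) simp
  finally show "free_reduction w = []"
    by (simp add: red_act_winv')
next
  assume "free_reduction w = []"
  then have "free_reduction (u @ w @ winv u) = free_reduction (u @ [] @ winv u)"
    by (intro free_reduction_cong) simp
  then show "free_reduction (u @ w @ winv u) = []"
    by (simp add: red_act_winv)
qed

lemma is_path_obj: "is_path \<kappa> w s t \<Longrightarrow> obj \<kappa> s \<and> obj \<kappa> t"
  by (induction rule: is_path.induct) (auto elim: valid_letter.elims)

lemma is_path_Nil_iff: "is_path \<kappa> [] s t \<longleftrightarrow> s = t \<and> obj \<kappa> s"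
  by (auto elim: is_path.cases intro: is_path.Nil)

lemma is_path_Cons_iff:
  "is_path \<kappa> (l # w) s t \<longleftrightarrow> valid_letter \<kappa> l \<and> is_path \<kappa> w s (lsrc l) \<and> t = ltgt l"
  by (auto elim: is_path.cases intro: is_path.Cons)

lemma is_path_append_iff:
  "is_path \<kappa> (p @ q) s t \<longleftrightarrow> (\<exists>m. is_path \<kappa> p m t \<and> is_path \<kappa> q s m)"
  by (induction p arbitrary: t) (auto simp: is_path_Nil_iff is_path_Cons_iff dest: is_path_obj)

lemma is_path_endpoints_unique:
  "is_path \<kappa> w s t \<Longrightarrow> is_path \<kappa> w s' t' \<Longrightarrow> w \<noteq> [] \<Longrightarrow> s = s' \<and> t = t'"
proof (induction w arbitrary: t t')
  case (Cons l w)
  then show ?case by (cases w) (auto simp: is_path_Cons_iff is_path_Nil_iff)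
qed simp

lemma is_path_winv: "is_path \<kappa> w s t \<Longrightarrow> is_path \<kappa> (winv w) t s"
proof (induction rule: is_path.induct)
  case (Nil a)
  then show ?case by (simp add: is_path_Nil_iff)
next
  case (Cons l w s t)
  then show ?case using is_path_obj[OF Cons(2)]
    by (auto simp: is_path_append_iff is_path_Cons_iff is_path_Nil_iff elim: valid_letter.elims)
qed

lemma is_path_replace:
  assumes "is_path \<kappa> (p @ w @ q) s' t'" and "is_path \<kappa> w s t" and "w \<noteq> []"
    and "is_path \<kappa> w' s t"
  shows "is_path \<kappa> (p @ w' @ q) s' t'"
proof -
  from assms(1) obtain m1 m2 where
    p: "is_path \<kappa> p m1 t'" and w: "is_path \<kappa> w m2 m1" and q: "is_path \<kappa> q s' m2"
    unfolding is_path_append_iff[of \<kappa> p] is_path_append_iff[of \<kappa> w] by blast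
  with is_path_endpoints_unique[OF w assms(2,3)] show ?thesis
    using assms(4) by (auto simp: is_path_append_iff)
qed

lemma zeq_refl: "zeq \<kappa> w w"
  by (simp add: zeq_def)

lemma zeq_trans [trans]: "zeq \<kappa> w w' \<Longrightarrow> zeq \<kappa> w' w'' \<Longrightarrow> zeq \<kappa> w w''"
  unfolding zeq_def by (rule rtranclp_trans)

lemma zeq_sym: "zeq \<kappa> w w' \<Longrightarrow> zeq \<kappa> w' w"
  unfolding zeq_def by (rule sympD[OF symp_rtranclp, rotated]) (auto intro: sympI)

lemma zeq_if_zstep: "zstep \<kappa> w w' \<Longrightarrow> zeq \<kappa> w w'"
  unfolding zeq_def by auto

lemma zeq_is_path: "zeq \<kappa> w w' \<Longrightarrow> is_path \<kappa> w s t \<Longrightarrow> \<exists>s' t'. is_path \<kappa> w' s' t'"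
  unfolding zeq_def
proof (induction rule: rtranclp_induct)
  case (step w' w'')
  then show ?case unfolding zstep_def by blast
qed blast

lemma zstepI:
  "base_rel \<kappa> u v \<Longrightarrow> is_path \<kappa> (p @ u @ q) s t \<Longrightarrow> is_path \<kappa> (p @ v @ q) s t \<Longrightarrow>
    zstep \<kappa> (p @ u @ q) (p @ v @ q)"
  unfolding zstep_def by blast

lemma zstep_in_context:
  assumes "zstep \<kappa> w w'" and "is_path \<kappa> (p @ w @ q) s t" and "is_path \<kappa> (p @ w' @ q) s t"
  shows "zstep \<kappa> (p @ w @ q) (p @ w' @ q)"
proof -
  from assms(1) obtain p0 u v q0 where "w = p0 @ u @ q0" "w' = p0 @ v @ q0" "base_rel \<kappa> u v"
    unfolding zstep_def by blast
  then show ?thesis using zstepI[of \<kappa> u v "p @ p0" "q0 @ q" s t] assms(2,3) by simp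
qed

lemma base_rel_cancel: "valid_letter \<kappa> a \<Longrightarrow> base_rel \<kappa> [a, linv a] []"
  using base_rel.cancel[of \<kappa>] base_rel.edge[of \<kappa> _ _ "[]"] by (cases a) auto

lemma zstep_cancel:
  assumes "is_path \<kappa> (p @ [a, linv a] @ q) s t"
  shows "zstep \<kappa> (p @ [a, linv a] @ q) (p @ q)" and "is_path \<kappa> (p @ q) s t"
proof -
  from assms obtain m1 m2 where
    p: "is_path \<kappa> p m1 t" and aa: "is_path \<kappa> [a, linv a] m2 m1" and q: "is_path \<kappa> q s m2"
    unfolding is_path_append_iff[of \<kappa> p] is_path_append_iff[of \<kappa> "[a, linv a]"] by blast
  from aa have "valid_letter \<kappa> a" and "m1 = m2"
    by (auto simp: is_path_Cons_iff is_path_Nil_iff)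
  with p q show pq: "is_path \<kappa> (p @ q) s t"
    by (auto simp: is_path_append_iff)
  show "zstep \<kappa> (p @ [a, linv a] @ q) (p @ q)"
    using zstepI[OF base_rel_cancel[OF \<open>valid_letter \<kappa> a\<close>], of p q s t] assms pq by simp
qed

lemma zeq_cancel_winv:
  "is_path \<kappa> (p @ winv w @ w @ q) s t \<Longrightarrow> zeq \<kappa> (p @ winv w @ w @ q) (p @ q)"
proof (induction w arbitrary: p q)
  case Nil
  then show ?case by (simp add: zeq_refl)
next
  case (Cons l w)
  have split: "p @ winv (l # w) @ (l # w) @ q = (p @ winv w) @ [linv l, linv (linv l)] @ (w @ q)"
    by simp
  from zstep_cancel[of \<kappa> "p @ winv w" "linv l" "w @ q" s t] Cons.prems
  have "zstep \<kappa> (p @ winv (l # w) @ (l # w) @ q) (p @ winv w @ w @ q)"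
    and "is_path \<kappa> (p @ winv w @ w @ q) s t"
    by (simp_all only: split append.assoc)
  with Cons.IH show ?case
    by (metis zeq_if_zstep zeq_trans)
qed

lemma zeq_Nil_if_free_reduction_Nil:
  "is_path \<kappa> w s t \<Longrightarrow> free_reduction w = [] \<Longrightarrow> zeq \<kappa> w []"
proof (induction "length w" arbitrary: w rule: less_induct)
  case less
  show ?case
  proof (cases "reduced w")
    case True
    with less.prems have "w = []" by (simp add: free_reduction_reduced)
    then show ?thesis by (simp add: zeq_refl)
  next
    case False
    then obtain p a q where w: "w = p @ [a, linv a] @ q"
      using not_reduced_cancelling_pair by blast
    with zstep_cancel[of \<kappa> p a q s t] less.prems
    have "zstep \<kappa> w (p @ q)" and "is_path \<kappa> (p @ q) s t" by auto
    moreover have "free_reduction (p @ q) = []"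
      using less.prems w free_reduction_cancel by metis
    ultimately show ?thesis
      using less.hyps[of "p @ q"] w by (auto intro: zeq_trans zeq_if_zstep)
  qed
qed

lemma rtranclp_avoiding_target: "r\<^sup>*\<^sup>* x y \<Longrightarrow> (\<lambda>a b. r a b \<and> a \<noteq> y)\<^sup>*\<^sup>* x y"
  by (induction rule: converse_rtranclp_induct)
    (auto intro: converse_rtranclp_into_rtranclp)

text \<open>The chain witnessing zeq w [] is cut at its first empty word: [] is a loop at every
  object, so beyond it the chain may change base point and no longer fit into the context.\<close>

lemma zeq_Nil_in_context:
  assumes "zeq \<kappa> w []" and "is_path \<kappa> w s t" and "is_path \<kappa> (p @ w @ q) s' t'"
  shows "zeq \<kappa> (p @ w @ q) (p @ q)"
proof -
  have "(\<lambda>a b. (zstep \<kappa> a b \<or> zstep \<kappa> b a) \<and> a \<noteq> [])\<^sup>*\<^sup>* w []"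
    using assms(1) unfolding zeq_def by (rule rtranclp_avoiding_target)
  then show ?thesis using assms(2,3)
  proof (induction arbitrary: s t rule: converse_rtranclp_induct)
    case base
    then show ?case by (simp add: zeq_refl)
  next
    case (step w w')
    then have ne: "w \<noteq> []" and conv: "zstep \<kappa> w w' \<or> zstep \<kappa> w' w" by auto
    from conv obtain s0 t0 where "is_path \<kappa> w s0 t0" "is_path \<kappa> w' s0 t0"
      unfolding zstep_def by blast
    with is_path_endpoints_unique[OF step.prems(1) _ ne] have w': "is_path \<kappa> w' s t"
      by metis
    have ctx: "is_path \<kappa> (p @ w' @ q) s' t'"
      using is_path_replace[OF step.prems(2,1) ne w'] .
    have "zeq \<kappa> (p @ w @ q) (p @ w' @ q)"
      using conv zstep_in_context[OF _ step.prems(2) ctx] zstep_in_context[OF _ ctx step.prems(2)]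
      by (metis zeq_if_zstep zeq_sym)
    then show ?case using step.IH[OF w' ctx] by (rule zeq_trans)
  qed
qed

lemma zeq_Nil_unconj:
  assumes "is_path \<kappa> z \<alpha> \<alpha>" and "is_path \<kappa> v \<alpha> \<gamma>" and "zeq \<kappa> (v @ z @ winv v) []"
  shows "zeq \<kappa> z []"
proof -
  have conj: "is_path \<kappa> (v @ z @ winv v) \<gamma> \<gamma>"
    using assms(1,2) is_path_winv[OF assms(2)] by (auto simp: is_path_append_iff)
  have paths: "is_path \<kappa> ([] @ winv v @ v @ z) \<alpha> \<alpha>" "is_path \<kappa> ([] @ winv v @ v @ []) \<alpha> \<alpha>"
    "is_path \<kappa> (winv v @ (v @ z @ winv v) @ v) \<alpha> \<alpha>"
    using assms(1,2) is_path_winv[OF assms(2)] by (auto simp: is_path_append_iff)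
  have "zeq \<kappa> z (winv v @ v @ z)"
    using zeq_cancel_winv[OF paths(1)] by (simp add: zeq_sym)
  also have "zeq \<kappa> (winv v @ v @ z) (winv v @ (v @ z @ winv v) @ v)"
    using zeq_cancel_winv[of \<kappa> "winv v @ v @ z" v "[]" \<alpha> \<alpha>] paths(3)
    by (simp add: zeq_sym)
  also have "zeq \<kappa> (winv v @ (v @ z @ winv v) @ v) (winv v @ v)"
    using zeq_Nil_in_context[OF assms(3) conj paths(3)] .
  also have "zeq \<kappa> (winv v @ v) []"
    using zeq_cancel_winv[OF paths(2)] by simp
  finally show ?thesis .
qed

fun is_edge :: "'o letter \<Rightarrow> bool" where
  "is_edge (Gen _ _ _) = False"
| "is_edge (Edge _ _) = True"

lemma is_edge_linv [simp]: "is_edge (linv a) = is_edge a"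
  by (cases a) auto

lemma filter_is_edge_winv [simp]: "filter is_edge (winv w) = winv (filter is_edge w)"
  by (induction w) auto

definition edge_image :: "'o letter list \<Rightarrow> 'o letter list" where
  "edge_image w = free_reduction (filter is_edge w)"

lemma free_reduction_edges_base_rel:
  "base_rel \<kappa> u v \<Longrightarrow> free_reduction (filter is_edge u) = free_reduction (filter is_edge v)"
proof (induction rule: base_rel.induct)
  case (edge \<alpha> \<beta> a)
  have "filter is_edge (map (gen_at \<delta>) a) = []" for \<delta>
    by (induction a) (auto simp: gen_at_def)
  then show ?case by simp
qed simp

lemma edge_image_zstep: "zstep \<kappa> w w' \<Longrightarrow> edge_image w = edge_image w'"
  unfolding zstep_def edge_image_def
  using free_reduction_cong[OF free_reduction_edges_base_rel] by fastforce

lemma edge_image_zeq: "zeq \<kappa> w w' \<Longrightarrow> edge_image w = edge_image w'"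
  unfolding zeq_def by (induction rule: rtranclp_induct) (auto dest: edge_image_zstep)

lemma edge_image_conj_eq_Nil_iff: "edge_image (u @ w @ winv u) = [] \<longleftrightarrow> edge_image w = []"
  using free_reduction_conj_eq_Nil_iff[of "filter is_edge u"] by (simp add: edge_image_def)

lemma edge_image_in_ZX: "in_ZX \<kappa> w \<Longrightarrow> edge_image w = []"
proof -
  assume "in_ZX \<kappa> w"
  then obtain \<delta> x where gens: "\<forall>l\<in>set x. \<exists>\<xi> s. l = Gen \<delta> \<xi> s" and "zeq \<kappa> w x"
    unfolding in_ZX_def by blast
  from gens have "filter is_edge x = []" by (induction x) auto
  with edge_image_zeq[OF \<open>zeq \<kappa> w x\<close>] show ?thesis by (simp add: edge_image_def)
qed

lemma zeq_Nil_if_in_ZY: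
  assumes "in_ZY \<kappa> w" and "is_path \<kappa> w s t" and "edge_image w = []"
  shows "zeq \<kappa> w []"
proof -
  from assms(1) obtain x where edges: "\<forall>l\<in>set x. \<exists>\<alpha> \<beta>. l = Edge \<alpha> \<beta>" and "zeq \<kappa> w x"
    unfolding in_ZY_def by blast
  from edges have "filter is_edge x = x" by (induction x) auto
  with edge_image_zeq[OF \<open>zeq \<kappa> w x\<close>] assms(3) have "free_reduction x = []"
    by (simp add: edge_image_def)
  moreover obtain s' t' where "is_path \<kappa> x s' t'"
    using zeq_is_path[OF \<open>zeq \<kappa> w x\<close> assms(2)] by blast
  ultimately have "zeq \<kappa> x []" by (rule zeq_Nil_if_free_reduction_Nil[rotated])
  with \<open>zeq \<kappa> w x\<close> show ?thesis by (rule zeq_trans)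
qed

theorem lemma3p12:
  fixes \<kappa> \<alpha> \<beta> \<gamma> :: "'o::wellorder" and z u v :: "'o letter list"
  assumes "uncountable_cofinality \<kappa>"
    and "is_path \<kappa> z \<alpha> \<alpha>"
    and "is_path \<kappa> u \<alpha> \<beta>"
    and "is_path \<kappa> v \<alpha> \<gamma>"
    and "in_ZX \<kappa> (u @ z @ winv u)"
    and "in_ZY \<kappa> (v @ z @ winv v)"
  shows "zeq \<kappa> z []"
proof -
  have "edge_image (u @ z @ winv u) = []"
    using assms(5) by (rule edge_image_in_ZX)
  then have "edge_image (v @ z @ winv v) = []"
    by (simp add: edge_image_conj_eq_Nil_iff)
  moreover have "is_path \<kappa> (v @ z @ winv v) \<gamma> \<gamma>"
    using assms(2,4) is_path_winv[OF assms(4)] by (auto simp: is_path_append_iff)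
  ultimately have "zeq \<kappa> (v @ z @ winv v) []"
    using assms(6) zeq_Nil_if_in_ZY by blast
  with assms(2,4) show ?thesis by (rule zeq_Nil_unconj)
qed

end
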